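(* Let $n=2d$ be even, let $G=D_{2n}=\langle z,y\mid z^{2n}=y^2=1,\ yzy=z^{-1}\rangle$ and $H=\langle z^2,y\rangle\cong D_n$ (an index 2 subgroup). Then for none of the cover types I, II, III-a, III-b does there exist an admissible homomorphism $f:T(m_1,\dots,m_r)\to G$.
   Context: For integers $m_1,\dots,m_r\ge 2$, $T(m_1,\dots,m_r):=\langle\gamma_1,\dots,\gamma_r\mid \gamma_1\cdots\gamma_r=1,\ \gamma_i^{m_i}=1\rangle$. Let $H\subset G$ have index 2 and let $f_H:=\pi_H\circ f$, where $\pi_H:G\to G/H\cong\mathbb Z/2$ is the quotient map. A homomorphism $f:T(m_1,\dots,m_r)\to G$ is admissible for a given cover type if $f$ is surjective, $f(\gamma_i)$ has order exactly $m_i$, and the branching data are as follows: Cover type I: $r=6$, $(m_i)=(2,2,2,2,2,2)$, and $f_H(\gamma_i)\neq 0$ for all $i$. Cover type II: $r=5$, $(m_i)=(2,2,2,2,c_5)$, $f_H(\gamma_i)\ne 0$ for $i\le 4$ and $f_H(\gamma_5)=0$. Cover type III-a: $r=4$, $(m_i)=(2,2,2,2d_4)$ with $d_4>1$, and $f_H(\gamma_i)\neq0$ for all $i$. Cover type III-b: $r=4$, $(m_i)=(2,2,c_3,c_4)$ with $c_3\le c_4$, $c_4>2$, $f_H(\gamma_1),f_H(\gamma_2)\ne 0$ and $f_H(\gamma_3)=f_H(\gamma_4)=0$. *)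

theory Defs
  imports "HOL-Algebra.Algebra"
begin

text \<open>Concrete model of the dihedral group of order 2N with rotation subgroup of order N:
  the element (a, e) stands for z^a y^e, with 0 \<le> a < N.  Multiplication:
  z^a y^e * z^b y^f = z^(a + (-1)^e b) y^(e xor f).
  With N = 2n this is D_{2n} = < z, y | z^{2n} = y^2 = 1, yzy = z^{-1} >.\<close>
definition dihedral :: "nat \<Rightarrow> (int \<times> bool) monoid" where
  "dihedral N = \<lparr> carrier = {0..<int N} \<times> UNIV,
     monoid.mult = (\<lambda>(a, e) (b, f). ((a + (if e then - b else b)) mod int N, e \<noteq> f)),
     one = (0, False) \<rparr>"

definition dz :: "int \<times> bool" where "dz = (1, False)"
definition dy :: "int \<times> bool" where "dy = (0, True)"

definition list_prod :: "('a, 'b) monoid_scheme \<Rightarrow> 'a list \<Rightarrow> 'a" where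
  "list_prod G gs = foldr (\<lambda>g acc. g \<otimes>\<^bsub>G\<^esub> acc) gs \<one>\<^bsub>G\<^esub>"

text \<open>A homomorphism f : T(m_1,...,m_r) \<rightarrow> G is the same thing (universal property of the
  presentation) as the tuple gs = (f(\<gamma>_1),...,f(\<gamma>_r)) of elements of G with
  g_1 \<cdots> g_r = 1 and g_i^{m_i} = 1.  Such f is admissible (apart from branching data) iff
  it is surjective, i.e. the g_i generate G, and each g_i has order exactly m_i.\<close>
definition T_hom :: "('a, 'b) monoid_scheme \<Rightarrow> nat list \<Rightarrow> 'a list \<Rightarrow> bool" where
  "T_hom G ms gs \<longleftrightarrow> length gs = length ms \<and> set gs \<subseteq> carrier G
     \<and> list_prod G gs = \<one>\<^bsub>G\<^esub>
     \<and> (\<forall>i < length ms. gs ! i [^]\<^bsub>G\<^esub> (ms ! i) = \<one>\<^bsub>G\<^esub>)"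

definition admissible_base :: "('a, 'b) monoid_scheme \<Rightarrow> nat list \<Rightarrow> 'a list \<Rightarrow> bool" where
  "admissible_base G ms gs \<longleftrightarrow> (\<forall>m \<in> set ms. m \<ge> 2) \<and> T_hom G ms gs
     \<and> generate G (set gs) = carrier G
     \<and> (\<forall>i < length ms. group.ord G (gs ! i) = ms ! i)"

text \<open>f_H(\<gamma>_i) \<noteq> 0 iff f(\<gamma>_i) \<notin> H.\<close>
definition admissible_I :: "('a, 'b) monoid_scheme \<Rightarrow> 'a set \<Rightarrow> 'a list \<Rightarrow> bool" where
  "admissible_I G H gs \<longleftrightarrow> admissible_base G [2,2,2,2,2,2] gs
     \<and> (\<forall>i < 6. gs ! i \<notin> H)"

definition admissible_II :: "('a, 'b) monoid_scheme \<Rightarrow> 'a set \<Rightarrow> 'a list \<Rightarrow> bool" where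
  "admissible_II G H gs \<longleftrightarrow> (\<exists>c5. admissible_base G [2,2,2,2,c5] gs
     \<and> (\<forall>i < 4. gs ! i \<notin> H) \<and> gs ! 4 \<in> H)"

definition admissible_IIIa :: "('a, 'b) monoid_scheme \<Rightarrow> 'a set \<Rightarrow> 'a list \<Rightarrow> bool" where
  "admissible_IIIa G H gs \<longleftrightarrow> (\<exists>d4. d4 > 1 \<and> admissible_base G [2,2,2,2*d4] gs
     \<and> (\<forall>i < 4. gs ! i \<notin> H))"

definition admissible_IIIb :: "('a, 'b) monoid_scheme \<Rightarrow> 'a set \<Rightarrow> 'a list \<Rightarrow> bool" where
  "admissible_IIIb G H gs \<longleftrightarrow> (\<exists>c3 c4. c3 \<le> c4 \<and> c4 > 2 \<and> admissible_base G [2,2,c3,c4] gs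
     \<and> gs ! 0 \<notin> H \<and> gs ! 1 \<notin> H \<and> gs ! 2 \<in> H \<and> gs ! 3 \<in> H)"

end

theory Submission
  imports Defs
begin

text \<open>Besides \<open>H = \<langle>z\<^sup>2, y\<rangle>\<close>, the group \<open>D\<^sub>2\<^sub>n\<close> has the index-2 subgroup
  \<open>K = \<langle>z\<^sup>2, zy\<rangle>\<close>. As \<open>n\<close> is even, the central involution \<open>z\<^sup>n\<close> lies in \<open>H\<close>, so every
  involution outside \<open>H\<close> is a reflection \<open>z\<^sup>a y\<close> with \<open>a\<close> odd, which lies in \<open>K\<close>; and every
  element of \<open>H\<close> that is not an involution is a rotation by an even power, which lies in \<open>K\<close> too.
  In each cover type this puts all but one of the \<open>f(\<gamma>\<^sub>i)\<close> into \<open>K\<close>, the relation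
  \<open>\<gamma>\<^sub>1 \<cdots> \<gamma>\<^sub>r = 1\<close> then forces the last one into \<open>K\<close> as well, and so \<open>f\<close> is not surjective.\<close>

lemma list_prod_Nil [simp]: "list_prod G [] = \<one>\<^bsub>G\<^esub>"
  and list_prod_Cons [simp]: "list_prod G (g # gs) = g \<otimes>\<^bsub>G\<^esub> list_prod G gs"
  by (simp_all add: list_prod_def)

lemma (in monoid) list_prod_closed: "set gs \<subseteq> carrier G \<Longrightarrow> list_prod G gs \<in> carrier G"
  by (induction gs) auto

lemma (in group) list_prod_in_subgroup:
  "subgroup K G \<Longrightarrow> set gs \<subseteq> K \<Longrightarrow> list_prod G gs \<in> K"
  by (induction gs) (auto simp: subgroup.one_closed subgroup.m_closed)

lemma (in monoid) list_prod_append: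
  "set xs \<subseteq> carrier G \<Longrightarrow> set ys \<subseteq> carrier G
     \<Longrightarrow> list_prod G (xs @ ys) = list_prod G xs \<otimes> list_prod G ys"
  by (induction xs) (auto simp: m_assoc list_prod_closed)

lemma (in group) list_prod_eq_one_all_but_one_in_subgroup:
  assumes K: "subgroup K G" and gs: "set gs \<subseteq> carrier G" "list_prod G gs = \<one>"
    and i: "i < length gs" and others: "\<forall>j < length gs. j \<noteq> i \<longrightarrow> gs ! j \<in> K"
  shows "set gs \<subseteq> K"
proof -
  define xs g ys where "xs = take i gs" and "g = gs ! i" and "ys = drop (Suc i) gs"
  have gs_eq: "gs = xs @ g # ys"
    using i by (simp add: xs_def g_def ys_def id_take_nth_drop)
  have xs: "set xs \<subseteq> K" and ys: "set ys \<subseteq> K"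
    using others by (auto simp: xs_def ys_def in_set_conv_nth)
  then have p: "list_prod G xs \<in> K" and q: "list_prod G ys \<in> K"
    using K by (simp_all add: list_prod_in_subgroup)
  have g: "g \<in> carrier G"
    using gs gs_eq by auto
  have p_carrier: "list_prod G xs \<in> carrier G" and q_carrier: "list_prod G ys \<in> carrier G"
    using p q K by (simp_all add: subgroup.mem_carrier)
  have "list_prod G xs \<otimes> (g \<otimes> list_prod G ys) = \<one>"
    using gs gs_eq by (simp add: list_prod_append)
  then have "inv (list_prod G xs) = g \<otimes> list_prod G ys"
    using p_carrier q_carrier g by (simp add: inv_equality inv_comm)
  then have "g = inv (list_prod G xs) \<otimes> inv (list_prod G ys)"
    using p_carrier q_carrier g by (simp add: inv_solve_right)
  then have "g \<in> K"
    using p q K by (simp add: subgroup.m_closed subgroup.m_inv_closed)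
  with xs ys show ?thesis
    by (subst gs_eq) simp
qed

definition parity_character :: "('a, 'b) monoid_scheme \<Rightarrow> ('a \<Rightarrow> bool) \<Rightarrow> bool" where
  "parity_character G \<chi> \<longleftrightarrow>
     (\<forall>x \<in> carrier G. \<forall>y \<in> carrier G. \<chi> (x \<otimes>\<^bsub>G\<^esub> y) = (\<chi> x \<noteq> \<chi> y))"

lemma (in group) parity_character_kernel_subgroup:
  assumes "parity_character G \<chi>"
  shows "subgroup {x \<in> carrier G. \<not> \<chi> x} G"
proof -
  have hom: "\<chi> (x \<otimes> y) = (\<chi> x \<noteq> \<chi> y)" if "x \<in> carrier G" "y \<in> carrier G" for x y
    using assms that by (simp add: parity_character_def)
  have "\<not> \<chi> \<one>"
    using hom[of \<one> \<one>] by simp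
  moreover have "\<chi> (inv x) = \<chi> x" if "x \<in> carrier G" for x
    using hom[of x "inv x"] that \<open>\<not> \<chi> \<one>\<close> by auto
  ultimately show ?thesis
    by (intro subgroupI) (auto simp: hom)
qed

lemma dihedral_carrier [simp]: "carrier (dihedral N) = {0..<int N} \<times> UNIV"
  by (simp add: dihedral_def)

lemma dihedral_mult [simp]:
  "(a, e) \<otimes>\<^bsub>dihedral N\<^esub> (b, f) = ((a + (if e then - b else b)) mod int N, e \<noteq> f)"
  by (simp add: dihedral_def)

lemma dihedral_one [simp]: "\<one>\<^bsub>dihedral N\<^esub> = (0, False)"
  by (simp add: dihedral_def)

lemma dihedral_group: "N > 0 \<Longrightarrow> group (dihedral N)"
proof (rule groupI)
  fix x y z
  assume "x \<in> carrier (dihedral N)" "y \<in> carrier (dihedral N)" "z \<in> carrier (dihedral N)"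
  then show "x \<otimes>\<^bsub>dihedral N\<^esub> y \<otimes>\<^bsub>dihedral N\<^esub> z = x \<otimes>\<^bsub>dihedral N\<^esub> (y \<otimes>\<^bsub>dihedral N\<^esub> z)"
    by (cases x, cases y, cases z) (auto simp: mod_simps algebra_simps)
next
  fix x assume "N > 0" "x \<in> carrier (dihedral N)"
  moreover obtain a e where "x = (a, e)"
    by fastforce
  ultimately show "\<exists>y\<in>carrier (dihedral N). y \<otimes>\<^bsub>dihedral N\<^esub> x = \<one>\<^bsub>dihedral N\<^esub>"
    by (intro bexI[of _ "(if e then a else - a mod int N, e)"]) (auto simp: mod_simps)
qed (auto simp: mod_simps)

lemma dz_pow: "dz [^]\<^bsub>dihedral N\<^esub> (k::nat) = (int k mod int N, False)"
  by (induction k) (auto simp: dz_def mod_simps add.commute)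

lemma parity_character_dihedral:
  assumes "even N"
  shows "parity_character (dihedral N) (\<lambda>x. odd (fst x))"
    and "parity_character (dihedral N) (\<lambda>x. snd x \<noteq> odd (fst x))"
  using assms by (auto simp: parity_character_def dvd_mod_iff)

definition dihedral_even :: "nat \<Rightarrow> (int \<times> bool) set" where
  "dihedral_even N = {x \<in> carrier (dihedral N). even (fst x)}"

text \<open>The index-2 subgroup \<open>\<langle>z\<^sup>2, zy\<rangle>\<close>.\<close>
definition dihedral_twisted :: "nat \<Rightarrow> (int \<times> bool) set" where
  "dihedral_twisted N = {x \<in> carrier (dihedral N). snd x = odd (fst x)}"

lemma subgroup_dihedral_even:
  assumes "N > 0" "even N"
  shows "subgroup (dihedral_even N) (dihedral N)"
  using group.parity_character_kernel_subgroup[OF dihedral_group parity_character_dihedral(1)] assms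
  by (simp add: dihedral_even_def)

lemma subgroup_dihedral_twisted:
  assumes "N > 0" "even N"
  shows "subgroup (dihedral_twisted N) (dihedral N)"
  using group.parity_character_kernel_subgroup[OF dihedral_group parity_character_dihedral(2)] assms
  by (simp add: dihedral_twisted_def)

lemma generate_dz2_dy_eq_dihedral_even:
  assumes "N > 0" "even N"
  shows "generate (dihedral N) {dz [^]\<^bsub>dihedral N\<^esub> (2::nat), dy} = dihedral_even N"
    (is "generate ?G ?S = _")
proof
  interpret group ?G
    using assms(1) by (rule dihedral_group)
  show "generate ?G ?S \<subseteq> dihedral_even N"
    using assms by (intro generate_subgroup_incl subgroup_dihedral_even)
      (auto simp: dihedral_even_def dz_pow dy_def dvd_mod_iff)
  show "dihedral_even N \<subseteq> generate ?G ?S"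
  proof
    fix x assume x: "x \<in> dihedral_even N"
    then obtain k e where x_eq: "x = (int (2 * k), e)" and k: "int (2 * k) < int N"
      unfolding dihedral_even_def by (auto elim!: evenE) (metis nonneg_int_cases)
    have dz: "dz \<in> carrier ?G"
      using assms by (auto simp: dz_def elim: oddE)
    then have "(dz [^]\<^bsub>?G\<^esub> (2::nat)) [^]\<^bsub>?G\<^esub> k = (int (2 * k), False)"
      using k by (subst nat_pow_pow) (simp_all add: dz_pow)
    moreover have "(dz [^]\<^bsub>?G\<^esub> (2::nat)) [^]\<^bsub>?G\<^esub> int k \<in> generate ?G ?S"
      using assms dz
      by (intro subgroup_int_pow_closed generate_is_subgroup generate.incl) (auto simp: dy_def dz_pow)
    ultimately have rotation: "(int (2 * k), False) \<in> generate ?G ?S"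
      by (simp add: int_pow_int)
    have "(int (2 * k), True) = (int (2 * k), False) \<otimes>\<^bsub>?G\<^esub> dy"
      using k by (simp add: dy_def)
    then have "(int (2 * k), True) \<in> generate ?G ?S"
      using rotation by (simp add: generate.eng generate.incl)
    with rotation show "x \<in> generate ?G ?S"
      by (cases e) (simp_all add: x_eq)
  qed
qed

lemma dihedral_twisted_if_involution_outside_even:
  assumes "4 dvd N" and x: "x \<in> carrier (dihedral N)" "x \<notin> dihedral_even N"
    and involution: "x [^]\<^bsub>dihedral N\<^esub> (2::nat) = \<one>\<^bsub>dihedral N\<^esub>"
  shows "x \<in> dihedral_twisted N"
proof -
  obtain a e where x_eq: "x = (a, e)"
    by fastforce
  have "odd a"
    using x by (simp add: x_eq dihedral_even_def)
  moreover have e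
  proof (rule ccontr)
    assume "\<not> e"
    then have "int N dvd a + a"
      using x involution by (simp add: x_eq numeral_2_eq_2 mod_eq_0_iff_dvd)
    then have "4 dvd 2 * a"
      using \<open>4 dvd N\<close> by (metis dvd_trans int_dvd_int_iff mult_2 of_nat_numeral)
    with \<open>odd a\<close> show False
      by presburger
  qed
  ultimately show ?thesis
    using x by (simp add: x_eq dihedral_twisted_def)
qed

lemma dihedral_twisted_if_non_involution_in_even:
  assumes x: "x \<in> dihedral_even N"
    and "x [^]\<^bsub>dihedral N\<^esub> (2::nat) \<noteq> \<one>\<^bsub>dihedral N\<^esub>"
  shows "x \<in> dihedral_twisted N"
proof -
  obtain a e where x_eq: "x = (a, e)"
    by fastforce
  have "\<not> e"
    using assms by (auto simp: x_eq dihedral_even_def numeral_2_eq_2)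
  then show ?thesis
    using x by (simp add: x_eq dihedral_even_def dihedral_twisted_def)
qed

lemma admissible_involution_in_dihedral_twisted:
  assumes "4 dvd N" "admissible_base (dihedral N) ms gs" "i < length ms" "ms ! i = 2"
    "gs ! i \<notin> dihedral_even N"
  shows "gs ! i \<in> dihedral_twisted N"
  using assms by (intro dihedral_twisted_if_involution_outside_even) (auto simp: admissible_base_def T_hom_def)

lemma admissible_generator_outside_dihedral_twisted:
  assumes N: "N > 0" "even N" and adm: "admissible_base (dihedral N) ms gs" and i: "i < length ms"
  shows "\<exists>j < length ms. j \<noteq> i \<and> gs ! j \<notin> dihedral_twisted N"
proof (rule ccontr)
  interpret group "dihedral N"
    using N(1) by (rule dihedral_group)
  assume "\<not> ?thesis"
  moreover have "length gs = length ms" "set gs \<subseteq> carrier (dihedral N)"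
    "list_prod (dihedral N) gs = \<one>\<^bsub>dihedral N\<^esub>"
    using adm by (simp_all add: admissible_base_def T_hom_def)
  ultimately have "set gs \<subseteq> dihedral_twisted N"
    using i by (intro list_prod_eq_one_all_but_one_in_subgroup[OF subgroup_dihedral_twisted[OF N]])
      auto
  then have "generate (dihedral N) (set gs) \<subseteq> dihedral_twisted N"
    using N by (intro generate_subgroup_incl subgroup_dihedral_twisted)
  moreover have "dy \<in> generate (dihedral N) (set gs)"
    using adm N by (simp add: admissible_base_def dy_def)
  ultimately show False
    by (auto simp: dihedral_twisted_def dy_def)
qed

lemma no_admissible_I_dihedral:
  assumes N: "N > 0" "4 dvd N"
  shows "\<not> admissible_I (dihedral N) (dihedral_even N) gs"
proof
  assume "admissible_I (dihedral N) (dihedral_even N) gs"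
  then have adm: "admissible_base (dihedral N) [2, 2, 2, 2, 2, 2] gs"
    and outside: "\<forall>i < 6. gs ! i \<notin> dihedral_even N"
    by (simp_all add: admissible_I_def)
  have "gs ! j \<in> dihedral_twisted N" if "j < 6" for j
  proof -
    have "[2, 2, 2, 2, 2, 2] ! j = (2::nat)"
      using that by (auto simp: less_Suc_eq numeral_eq_Suc)
    then show ?thesis
      using admissible_involution_in_dihedral_twisted[OF N(2) adm] outside that by simp
  qed
  moreover have "even N"
    using N(2) by presburger
  ultimately show False
    using admissible_generator_outside_dihedral_twisted[OF N(1) _ adm, of 0] by (auto simp: numeral_eq_Suc)
qed

lemma no_admissible_II_dihedral:
  assumes N: "N > 0" "4 dvd N"
  shows "\<not> admissible_II (dihedral N) (dihedral_even N) gs"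
proof
  assume "admissible_II (dihedral N) (dihedral_even N) gs"
  then obtain c5 where adm: "admissible_base (dihedral N) [2, 2, 2, 2, c5] gs"
    and outside: "\<forall>i < 4. gs ! i \<notin> dihedral_even N"
    by (auto simp: admissible_II_def)
  have "gs ! j \<in> dihedral_twisted N" if "j < 4" for j
  proof -
    have "[2, 2, 2, 2, c5] ! j = 2"
      using that by (auto simp: less_Suc_eq numeral_eq_Suc)
    then show ?thesis
      using admissible_involution_in_dihedral_twisted[OF N(2) adm] outside that by simp
  qed
  moreover have "even N"
    using N(2) by presburger
  ultimately show False
    using admissible_generator_outside_dihedral_twisted[OF N(1) _ adm, of 4] by (auto simp: numeral_eq_Suc)
qed

lemma no_admissible_IIIa_dihedral:
  assumes N: "N > 0" "4 dvd N"
  shows "\<not> admissible_IIIa (dihedral N) (dihedral_even N) gs"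
proof
  assume "admissible_IIIa (dihedral N) (dihedral_even N) gs"
  then obtain d4 where adm: "admissible_base (dihedral N) [2, 2, 2, 2 * d4] gs"
    and outside: "\<forall>i < 4. gs ! i \<notin> dihedral_even N"
    by (auto simp: admissible_IIIa_def)
  have "gs ! j \<in> dihedral_twisted N" if "j < 3" for j
  proof -
    have "[2, 2, 2, 2 * d4] ! j = 2"
      using that by (auto simp: less_Suc_eq numeral_eq_Suc)
    then show ?thesis
      using admissible_involution_in_dihedral_twisted[OF N(2) adm] outside that by simp
  qed
  moreover have "even N"
    using N(2) by presburger
  ultimately show False
    using admissible_generator_outside_dihedral_twisted[OF N(1) _ adm, of 3] by (auto simp: numeral_eq_Suc)
qed

lemma no_admissible_IIIb_dihedral:
  assumes N: "N > 0" "4 dvd N"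
  shows "\<not> admissible_IIIb (dihedral N) (dihedral_even N) gs"
proof
  interpret group "dihedral N"
    using N(1) by (rule dihedral_group)
  assume "admissible_IIIb (dihedral N) (dihedral_even N) gs"
  then obtain c3 c4 where adm: "admissible_base (dihedral N) [2, 2, c3, c4] gs" and "c4 > 2"
    and outside: "gs ! 0 \<notin> dihedral_even N" "gs ! 1 \<notin> dihedral_even N"
    and inside: "gs ! 3 \<in> dihedral_even N"
    by (auto simp: admissible_IIIb_def)
  have "gs ! j \<in> dihedral_twisted N" if "j < 2" for j
    using admissible_involution_in_dihedral_twisted[OF N(2) adm, of j] outside that
    by (auto simp: less_Suc_eq numeral_eq_Suc)
  moreover have "gs ! 3 \<in> dihedral_twisted N"
  proof (rule dihedral_twisted_if_non_involution_in_even[OF inside])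
    have g3: "gs ! 3 \<in> carrier (dihedral N)" and "ord (gs ! 3) = c4"
      using adm by (auto simp del: dihedral_carrier simp: admissible_base_def T_hom_def)
    with \<open>c4 > 2\<close> have "\<not> ord (gs ! 3) dvd 2"
      by (auto dest: dvd_imp_le)
    then show "gs ! 3 [^]\<^bsub>dihedral N\<^esub> (2::nat) \<noteq> \<one>\<^bsub>dihedral N\<^esub>"
      using pow_eq_id[OF g3, of 2] by blast
  qed
  moreover have "even N"
    using N(2) by presburger
  ultimately show False
    using admissible_generator_outside_dihedral_twisted[OF N(1) _ adm, of 2]
    by (auto simp: less_Suc_eq numeral_eq_Suc)
qed

theorem lemma5p7:
  fixes n d :: nat
  assumes "d \<ge> 1" and "n = 2 * d"
  defines "G \<equiv> dihedral (2 * n)"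
  defines "H \<equiv> generate G {dz [^]\<^bsub>G\<^esub> (2::nat), dy}"
  shows "(\<nexists>gs. admissible_I G H gs) \<and> (\<nexists>gs. admissible_II G H gs)
       \<and> (\<nexists>gs. admissible_IIIa G H gs) \<and> (\<nexists>gs. admissible_IIIb G H gs)"
proof -
  have N: "2 * n > 0" "4 dvd 2 * n"
    using assms(1,2) by auto
  have "H = dihedral_even (2 * n)"
    unfolding H_def G_def using N by (intro generate_dz2_dy_eq_dihedral_even) auto
  then show ?thesis
    unfolding G_def
    using no_admissible_I_dihedral[OF N] no_admissible_II_dihedral[OF N]
      no_admissible_IIIa_dihedral[OF N] no_admissible_IIIb_dihedral[OF N]
    by blast
qed

end
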